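(* Let $V(1),\dots,V(T)\in\mathbb R^p$ and $0=\nu_0<\nu_1<\dots<\nu_M=T$ with $M\ge2$ be such that $V(\nu_m+1)=\dots=V(\nu_{m+1})$ for all $m=0,\dots,M-1$. For $t\in\{1,\dots,T-1\}$ let \[ \widetilde V(t)=\sqrt{\frac{T-t}{Tt}}\sum_{r=1}^tV(r)-\sqrt{\frac{t}{T(T-t)}}\sum_{r=t+1}^TV(r). \] Then the maximum of $\|\widetilde V(t)\|^2$ over $t\in\{1,\dots,T-1\}$ is attained at a change point $\nu_m$, $1\le m\le M-1$; and for each $m=1,\dots,M$, restricted to integers $t\in[\nu_{m-1},\nu_m]\cap\{1,\dots,T-1\}$, the function $t\mapsto\|\widetilde V(t)\|^2$ is either monotone or first decreases and then increases.
   Context: $\|\cdot\|$ is the Euclidean norm. The points $\nu_1,\dots,\nu_{M-1}$ are the change points of the piecewise constant sequence $V$. *)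

theory Defs
  imports "HOL-Analysis.Analysis"
begin

definition Vtilde :: "(nat \<Rightarrow> real ^ 'p) \<Rightarrow> nat \<Rightarrow> nat \<Rightarrow> real ^ 'p" where
  "Vtilde V T t =
     sqrt ((real T - real t) / (real T * real t)) *\<^sub>R (\<Sum>r\<in>{1..t}. V r)
   - sqrt (real t / (real T * (real T - real t))) *\<^sub>R (\<Sum>r\<in>{t+1..T}. V r)"

definition decreasing_on :: "nat set \<Rightarrow> (nat \<Rightarrow> real) \<Rightarrow> bool" where
  "decreasing_on S f \<longleftrightarrow> monotone_on S (\<le>) (\<ge>) f"

definition dec_then_inc_on :: "nat set \<Rightarrow> (nat \<Rightarrow> real) \<Rightarrow> bool" where
  "dec_then_inc_on S f \<longleftrightarrow>
     (\<exists>s\<in>S. decreasing_on {t\<in>S. t \<le> s} f \<and> mono_on {t\<in>S. s \<le> t} f)"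

end

theory Submission
  imports Defs
begin

text \<open>
  With \<open>S(t) = V(1) + \<dots> + V(t)\<close>, one has
  \<open>T t (T - t) \<parallel>\<tilde>V(t)\<parallel>\<^sup>2 = \<parallel>T S(t) - t S(T)\<parallel>\<^sup>2\<close>. Between two consecutive change points \<open>S\<close> is
  affine in \<open>t\<close>, so \<open>\<parallel>\<tilde>V(t)\<parallel>\<^sup>2\<close> is the squared norm of an affine function divided by the
  concave parabola \<open>T t (T - t)\<close>. Such a ratio is quasiconvex: if it is at most \<open>c\<close> at two
  points, then the convex quadratic \<open>\<parallel>A + t B\<parallel>\<^sup>2 - c T t (T - t)\<close> is nonpositive there and
  hence in between. Quasiconvexity on each segment gives the shape statement, and bounds
  \<open>\<parallel>\<tilde>V\<parallel>\<^sup>2\<close> on a segment by its values at the endpoints; these are change points or \<open>0\<close>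
  and \<open>T\<close>, where \<open>\<tilde>V\<close> vanishes.
\<close>

lemma norm_affine_sq_le_parabola_between:
  fixes A B :: "'a::real_inner" and x y z c T :: real
  assumes "x \<le> y" "y \<le> z" "0 \<le> c"
    and "(norm (A + x *\<^sub>R B))\<^sup>2 \<le> c * x * (T - x)"
    and "(norm (A + z *\<^sub>R B))\<^sup>2 \<le> c * z * (T - z)"
  shows "(norm (A + y *\<^sub>R B))\<^sup>2 \<le> c * y * (T - y)"
proof (cases "x = z")
  case True
  then show ?thesis using assms by simp
next
  case False
  define g where "g w = (norm (A + w *\<^sub>R B))\<^sup>2 - c * w * (T - w)" for w
  have g_expand: "g w = inner A A + 2 * w * inner A B + w\<^sup>2 * (inner B B + c) - c * T * w" for w
    unfolding g_def power2_norm_eq_inner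
    by (simp add: inner_add_left inner_add_right inner_commute[of B A] algebra_simps power2_eq_square)
  have "(z - x) * g y = (z - y) * g x + (y - x) * g z - (inner B B + c) * (z - y) * (y - x) * (z - x)"
    unfolding g_expand by (simp add: algebra_simps power2_eq_square)
  moreover have "(z - y) * g x \<le> 0" "(y - x) * g z \<le> 0"
    using assms by (simp_all add: g_def mult_nonneg_nonpos)
  moreover have "0 \<le> (inner B B + c) * (z - y) * (y - x) * (z - x)"
    using assms by simp
  ultimately have "(z - x) * g y \<le> 0"
    by linarith
  then have "g y \<le> 0"
    using assms False by (simp add: mult_le_0_iff)
  then show ?thesis unfolding g_def by simp
qed

lemma Vtilde_0 [simp]: "Vtilde V T 0 = 0"
  by (simp add: Vtilde_def)

lemma Vtilde_self [simp]: "Vtilde V T T = 0"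
  by (simp add: Vtilde_def)

lemma norm_Vtilde_sq_mult:
  fixes V :: "nat \<Rightarrow> real ^ 'p"
  assumes "t \<le> T"
  shows "(norm (Vtilde V T t))\<^sup>2 * (real T * real t * (real T - real t))
       = (norm (real T *\<^sub>R (\<Sum>r\<in>{1..t}. V r) - real t *\<^sub>R (\<Sum>r\<in>{1..T}. V r)))\<^sup>2"
proof (cases "t = 0 \<or> t = T")
  case True
  then show ?thesis by auto
next
  case False
  with assms have t: "0 < t" "t < T" by auto
  define D where "D = real T * real t * (real T - real t)"
  have "D > 0" unfolding D_def using t by simp
  have "(real T - real t) / (real T * real t) = (real T - real t)\<^sup>2 / D"
    and "real t / (real T * (real T - real t)) = (real t)\<^sup>2 / D"
    unfolding D_def using t by (simp_all add: field_simps power2_eq_square)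
  then have sqrt_left: "sqrt ((real T - real t) / (real T * real t)) = (real T - real t) / sqrt D"
    and sqrt_right: "sqrt (real t / (real T * (real T - real t))) = real t / sqrt D"
    using t by (simp_all add: real_sqrt_divide)
  define L R where "L = (\<Sum>r\<in>{1..t}. V r)" and "R = (\<Sum>r\<in>{t+1..T}. V r)"
  have total: "(\<Sum>r\<in>{1..T}. V r) = L + R"
    using sum.ub_add_nat[of 1 t V "T - t"] t unfolding L_def R_def by simp
  have "Vtilde V T t = (1 / sqrt D) *\<^sub>R (real T *\<^sub>R L - real t *\<^sub>R (L + R))"
    unfolding Vtilde_def sqrt_left sqrt_right L_def[symmetric] R_def[symmetric]
    by (simp add: algebra_simps scaleR_diff_left flip: scaleR_add_left add_divide_distrib)
  then have "(norm (Vtilde V T t))\<^sup>2 * D = (norm (real T *\<^sub>R L - real t *\<^sub>R (L + R)))\<^sup>2"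
    using \<open>D > 0\<close> by (simp add: power_divide)
  then show ?thesis
    unfolding D_def total L_def .
qed

lemma sum_upto_constant_tail:
  fixes V :: "nat \<Rightarrow> 'a::real_vector"
  assumes "a \<le> t" and "\<And>u. a < u \<Longrightarrow> u \<le> t \<Longrightarrow> V u = v"
  shows "(\<Sum>r\<in>{1..t}. V r) = (\<Sum>r\<in>{1..a}. V r) + real (t - a) *\<^sub>R v"
proof -
  have "(\<Sum>r\<in>{1..t}. V r) = (\<Sum>r\<in>{1..a}. V r) + (\<Sum>r\<in>{a+1..t}. V r)"
    using sum.ub_add_nat[of 1 a V "t - a"] assms(1) by simp
  also have "(\<Sum>r\<in>{a+1..t}. V r) = (\<Sum>r\<in>{a+1..t}. v)"
    using assms(2) by (intro sum.cong) auto
  finally show ?thesis by (simp add: sum_constant_scaleR)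
qed

lemma norm_Vtilde_sq_quasiconvex_on_segment:
  fixes V :: "nat \<Rightarrow> real ^ 'p"
  assumes const: "\<And>u. a < u \<Longrightarrow> u \<le> b \<Longrightarrow> V u = V b" and "b \<le> T"
    and order: "a \<le> x" "x \<le> y" "y \<le> z" "z \<le> b"
  shows "(norm (Vtilde V T y))\<^sup>2 \<le> max ((norm (Vtilde V T x))\<^sup>2) ((norm (Vtilde V T z))\<^sup>2)"
proof -
  define f where "f t = (norm (Vtilde V T t))\<^sup>2" for t
  define D where "D t = real T * real t * (real T - real t)" for t
  define S where "S t = (\<Sum>r\<in>{1..t}. V r)" for t
  define A where "A = real T *\<^sub>R S a - (real a * real T) *\<^sub>R V b"
  define B where "B = real T *\<^sub>R V b - S T"
  have affine: "f t * D t = (norm (A + real t *\<^sub>R B))\<^sup>2" if "a \<le> t" "t \<le> b" for t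
  proof -
    have S_t: "S t = S a + real (t - a) *\<^sub>R V b"
      unfolding S_def using that by (intro sum_upto_constant_tail const) auto
    have "real T *\<^sub>R S t - real t *\<^sub>R S T = A + real t *\<^sub>R B"
      unfolding S_t A_def B_def using that by (simp add: algebra_simps)
    then show ?thesis
      using norm_Vtilde_sq_mult[of t T V] that \<open>b \<le> T\<close> unfolding f_def D_def S_def by simp
  qed
  define c where "c = max (f x) (f z)"
  have "0 \<le> c" unfolding c_def f_def by (simp add: le_max_iff_disj)
  have endpoints: "(norm (A + real t *\<^sub>R B))\<^sup>2 \<le> (c * real T) * real t * (real T - real t)"
    if "t = x \<or> t = z" for t
  proof -
    have "a \<le> t" "t \<le> b" "t \<le> T" using that order \<open>b \<le> T\<close> by auto
    then have "(norm (A + real t *\<^sub>R B))\<^sup>2 = f t * D t" by (simp add: affine)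
    also have "\<dots> \<le> c * D t"
      using that \<open>t \<le> T\<close> by (intro mult_right_mono) (auto simp: c_def D_def)
    finally show ?thesis by (simp add: D_def mult_ac)
  qed
  have "(norm (A + real y *\<^sub>R B))\<^sup>2 \<le> (c * real T) * real y * (real T - real y)"
    using endpoints \<open>0 \<le> c\<close> order
    by (intro norm_affine_sq_le_parabola_between[of "real x" "real y" "real z"]) auto
  then have "f y * D y \<le> c * D y"
    using affine[of y] order by (simp add: D_def mult_ac)
  moreover have "0 < D y \<or> f y = 0"
  proof (cases "y = 0 \<or> y = T")
    case True
    then show ?thesis by (auto simp: f_def)
  next
    case False
    then show ?thesis using order \<open>b \<le> T\<close> by (simp add: D_def)
  qed
  ultimately have "f y \<le> c"
    using \<open>0 \<le> c\<close> by (auto simp: mult_le_cancel_right_pos)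
  then show ?thesis unfolding c_def f_def .
qed

lemma quasiconvex_imp_mono_on_or_dec_then_inc_on:
  fixes S :: "nat set" and f :: "nat \<Rightarrow> real"
  assumes "finite S"
    and quasiconvex: "\<And>x y z. x \<in> S \<Longrightarrow> y \<in> S \<Longrightarrow> z \<in> S \<Longrightarrow> x < y \<Longrightarrow> y < z \<Longrightarrow>
      f y \<le> max (f x) (f z)"
  shows "mono_on S f \<or> dec_then_inc_on S f"
proof (cases "S = {}")
  case True
  then show ?thesis by (simp add: mono_on_def)
next
  case False
  with \<open>finite S\<close> obtain s where "s \<in> S" and s_min: "\<And>t. t \<in> S \<Longrightarrow> f s \<le> f t"
    by (metis obtains_MIN Min_le finite_imageI imageI)
  have "decreasing_on {t\<in>S. t \<le> s} f"
    unfolding decreasing_on_def monotone_on_def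
  proof (intro ballI impI)
    fix u v assume "u \<in> {t\<in>S. t \<le> s}" "v \<in> {t\<in>S. t \<le> s}" "u \<le> v"
    then show "f v \<le> f u"
      using quasiconvex[of u v s] s_min[of u] \<open>s \<in> S\<close> by (cases "u = v \<or> v = s") auto
  qed
  moreover have "mono_on {t\<in>S. s \<le> t} f"
  proof (rule mono_onI)
    fix u v assume "u \<in> {t\<in>S. s \<le> t}" "v \<in> {t\<in>S. s \<le> t}" "u \<le> v"
    then show "f u \<le> f v"
      using quasiconvex[of s u v] s_min[of v] \<open>s \<in> S\<close> by (cases "u = v \<or> u = s") auto
  qed
  ultimately show ?thesis
    unfolding dec_then_inc_on_def using \<open>s \<in> S\<close> by blast
qed

lemma exists_segment_containing:
  fixes nu :: "nat \<Rightarrow> 'a::linorder"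
  assumes "nu 0 < t" "t \<le> nu M"
  shows "\<exists>m\<in>{1..M}. nu (m - 1) < t \<and> t \<le> nu m"
proof -
  define m where "m = (LEAST m. t \<le> nu m)"
  have "t \<le> nu m" and "m \<le> M"
    unfolding m_def using assms(2) by (auto intro: LeastI Least_le)
  moreover have "m \<noteq> 0"
    using \<open>t \<le> nu m\<close> assms(1) by (cases m) auto
  moreover have "\<not> t \<le> nu (m - 1)"
    using \<open>m \<noteq> 0\<close> unfolding m_def by (intro not_less_Least) auto
  ultimately show ?thesis
    by (intro bexI[of _ m]) (auto simp: not_le)
qed

locale piecewise_constant_sequence =
  fixes V :: "nat \<Rightarrow> real ^ 'p" and T M :: nat and nu :: "nat \<Rightarrow> nat"
  assumes nu0: "nu 0 = 0" and nuM: "nu M = T"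
    and nu_mono: "\<And>m. m < M \<Longrightarrow> nu m < nu (Suc m)"
    and piecewise: "\<And>m t. m < M \<Longrightarrow> nu m + 1 \<le> t \<Longrightarrow> t \<le> nu (Suc m) \<Longrightarrow> V t = V (nu (Suc m))"
begin

lemma change_point_le:
  assumes "m \<le> M"
  shows "nu m \<le> T"
proof -
  have "nu m \<le> nu M"
    by (rule lift_Suc_mono_le_ivl[of "{..<M}"]) (use assms in \<open>auto intro: less_imp_le nu_mono\<close>)
  then show ?thesis using nuM by simp
qed

lemma norm_Vtilde_sq_quasiconvex_between_change_points:
  assumes "m \<in> {1..M}" "nu (m - 1) \<le> x" "x \<le> y" "y \<le> z" "z \<le> nu m"
  shows "(norm (Vtilde V T y))\<^sup>2 \<le> max ((norm (Vtilde V T x))\<^sup>2) ((norm (Vtilde V T z))\<^sup>2)"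
proof (rule norm_Vtilde_sq_quasiconvex_on_segment[where a = "nu (m - 1)" and b = "nu m"])
  show "V u = V (nu m)" if "nu (m - 1) < u" "u \<le> nu m" for u
    using piecewise[of "m - 1" u] that assms(1) by auto
  show "nu m \<le> T"
    using change_point_le assms(1) by simp
qed (use assms in auto)

lemma norm_Vtilde_sq_max_at_change_point:
  assumes "M \<ge> 2"
  shows "\<exists>m\<in>{1..M-1}. \<forall>t\<in>{1..T-1}. (norm (Vtilde V T t))\<^sup>2 \<le> (norm (Vtilde V T (nu m)))\<^sup>2"
proof -
  define f where "f t = (norm (Vtilde V T t))\<^sup>2" for t
  obtain m0 where "m0 \<in> {1..M-1}" and m0_max: "Max ((f \<circ> nu) ` {1..M-1}) = f (nu m0)"
    by (rule obtains_MAX[of "{1..M-1}" "f \<circ> nu"]) (use assms in auto)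
  have at_change_points: "f (nu m) \<le> f (nu m0)" if "m \<le> M" for m
  proof (cases "m = 0 \<or> m = M")
    case True
    then show ?thesis by (auto simp: f_def nu0 nuM)
  next
    case False
    then have "m \<in> {1..M-1}" using that by auto
    then show ?thesis using m0_max Max_ge[of "(f \<circ> nu) ` {1..M-1}"] by auto
  qed
  have "f t \<le> f (nu m0)" if t: "t \<in> {1..T-1}" for t
  proof -
    have "nu 0 < t" "t \<le> nu M" using t nu0 nuM by auto
    then obtain m where m: "m \<in> {1..M}" "nu (m - 1) < t" "t \<le> nu m"
      by (blast dest: exists_segment_containing)
    then have "f t \<le> max (f (nu (m - 1))) (f (nu m))"
      unfolding f_def by (intro norm_Vtilde_sq_quasiconvex_between_change_points[of m]) auto
    also have "\<dots> \<le> f (nu m0)"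
      using at_change_points[of "m - 1"] at_change_points[of m] m(1) by auto
    finally show ?thesis .
  qed
  then show ?thesis
    using \<open>m0 \<in> {1..M-1}\<close> unfolding f_def by blast
qed

lemma norm_Vtilde_sq_shape_between_change_points:
  assumes "m \<in> {1..M}" and "S \<subseteq> {nu (m - 1)..nu m}"
  shows "mono_on S (\<lambda>t. (norm (Vtilde V T t))\<^sup>2) \<or> dec_then_inc_on S (\<lambda>t. (norm (Vtilde V T t))\<^sup>2)"
proof (rule quasiconvex_imp_mono_on_or_dec_then_inc_on)
  show "finite S"
    using assms(2) by (rule finite_subset) simp
  show "(norm (Vtilde V T y))\<^sup>2 \<le> max ((norm (Vtilde V T x))\<^sup>2) ((norm (Vtilde V T z))\<^sup>2)"
    if "x \<in> S" "y \<in> S" "z \<in> S" "x < y" "y < z" for x y z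
    using that assms by (intro norm_Vtilde_sq_quasiconvex_between_change_points[of m]) auto
qed

end

theorem proposition1:
  fixes V :: "nat \<Rightarrow> real ^ 'p" and T M :: nat and nu :: "nat \<Rightarrow> nat"
  assumes M2: "M \<ge> 2"
    and nu0: "nu 0 = 0" and nuM: "nu M = T"
    and nu_mono: "\<And>m. m < M \<Longrightarrow> nu m < nu (Suc m)"
    and piecewise: "\<And>m t. m < M \<Longrightarrow> nu m + 1 \<le> t \<Longrightarrow> t \<le> nu (Suc m) \<Longrightarrow> V t = V (nu (Suc m))"
  shows "(\<exists>m\<in>{1..M-1}. \<forall>t\<in>{1..T-1}. (norm (Vtilde V T t))\<^sup>2 \<le> (norm (Vtilde V T (nu m)))\<^sup>2)
       \<and> (\<forall>m\<in>{1..M}.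
            let S = {t. nu (m-1) \<le> t \<and> t \<le> nu m \<and> 1 \<le> t \<and> t \<le> T - 1};
                f = (\<lambda>t. (norm (Vtilde V T t))\<^sup>2)
            in mono_on S f \<or> decreasing_on S f \<or> dec_then_inc_on S f)"
proof -
  interpret piecewise_constant_sequence V T M nu
    using nu0 nuM nu_mono piecewise by unfold_locales
  have segment: "{t. nu (m-1) \<le> t \<and> t \<le> nu m \<and> 1 \<le> t \<and> t \<le> T - 1} \<subseteq> {nu (m-1)..nu m}" for m
    by auto
  show ?thesis
    unfolding Let_def
    using norm_Vtilde_sq_max_at_change_point[OF M2]
      norm_Vtilde_sq_shape_between_change_points[OF _ segment]
    by blast
qed

end
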